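(* Let $\mathsf G=\mathsf{SO}(5)$, $Q(A,B)=-\tfrac12\mathrm{tr}(AB)$ on $\mathfrak{so}(5)$, and $\mathsf H=\mathsf{SO}(2)$ the connected subgroup with Lie algebra $\mathfrak h=\mathrm{span}(E_{45})$, so that $\mathsf G/\mathsf H=V_3(\mathbb R^5)$. Let $\mathfrak m_1=\mathrm{span}(E_{23})$, $\mathfrak m_2=\mathrm{span}(E_{34},E_{35})$, $\mathfrak m_3=\mathrm{span}(E_{24},E_{25})$, $\mathfrak m_4=\mathrm{span}(E_{14},E_{15})$, $\mathfrak m_5=\mathrm{span}(E_{13})$, $\mathfrak m_6=\mathrm{span}(E_{12})$, and for $n\ge1$ let $$g^{(n)}=\tfrac1{4n^4}Q_{\mathfrak m_1}+Q_{\mathfrak m_2}+Q_{\mathfrak m_3}+nQ_{\mathfrak m_4}+2nQ_{\mathfrak m_5}+2nQ_{\mathfrak m_6}.$$ Then $(g^{(n)})$ is a diverging sequence in $\mathcal M^{\mathsf G}_1$ with bounded curvature, and $\mathrm{scal}(g^{(n)})=\frac{224n^6+288n^5-32n^4-8n^2-1}{32n^6}\to7$ as $n\to\infty$.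
   Context: $E_{ab}=e_ae_b^T-e_be_a^T\in\mathfrak{so}(5)$ for the standard basis $(e_1,\dots,e_5)$ of $\mathbb R^5$; these are $Q$-orthonormal. $\mathfrak m=\mathfrak m_1\oplus\dots\oplus\mathfrak m_6$ is the $Q$-orthogonal complement of $\mathfrak h$, $Q_{\mathfrak m_i}$ denotes $Q|_{\mathfrak m_i\times\mathfrak m_i}$ extended by zero, and $\mathsf{SO}(5)$-invariant metrics on $\mathsf{SO}(5)/\mathsf{SO}(2)$ are identified with $\mathrm{Ad}(\mathsf H)$-invariant inner products on $\mathfrak m$. $\mathcal M^{\mathsf G}_1$ is the set of invariant metrics with the same volume as $Q|_{\mathfrak m}$; diverging means not contained in any compact subset of $\mathcal M^{\mathsf G}_1$; bounded curvature means $|\sec(g^{(n)})|\le C$ uniformly in $n$ and over all $2$-planes. *)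

theory Defs
  imports "HOL-Analysis.Analysis" "HOL-Library.Numeral_Type"
begin

text \<open>The Lie algebra so(5) inside real 5x5 matrices; the standard basis
  e_1,...,e_5 of R^5 is indexed by the elements 1,2,3,4,5 of the numeral type 5.\<close>

definition Emat :: "5 \<Rightarrow> 5 \<Rightarrow> real^5^5" where
  "Emat a b = (\<chi> i j. (if i = a \<and> j = b then 1 else 0) - (if i = b \<and> j = a then 1 else 0))"

definition so5 :: "(real^5^5) set" where
  "so5 = {X. transpose X = - X}"

definition Qf :: "real^5^5 \<Rightarrow> real^5^5 \<Rightarrow> real" where
  "Qf A B = - (1/2) * trace (A ** B)"

definition brk :: "real^5^5 \<Rightarrow> real^5^5 \<Rightarrow> real^5^5" where
  "brk X Y = X ** Y - Y ** X"

text \<open>h = span(E_45); H = SO(2) = {exp(t E_45)} = rotations in the e_4,e_5 plane.\<close>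

definition hlie :: "(real^5^5) set" where
  "hlie = span {Emat 4 5}"

definition Hrot :: "real \<Rightarrow> real^5^5" where
  "Hrot t = (\<chi> i j. if i = 4 \<and> j = 4 then cos t else if i = 5 \<and> j = 5 then cos t
                    else if i = 4 \<and> j = 5 then sin t else if i = 5 \<and> j = 4 then - sin t
                    else if i = j then 1 else 0)"

definition Hgrp :: "(real^5^5) set" where
  "Hgrp = range Hrot"

definition Ad :: "real^5^5 \<Rightarrow> real^5^5 \<Rightarrow> real^5^5" where
  "Ad h X = h ** X ** matrix_inv h"

definition mspace :: "(real^5^5) set" where
  "mspace = {X \<in> so5. \<forall>Y \<in> hlie. Qf X Y = 0}"

definition projm :: "real^5^5 \<Rightarrow> real^5^5" where
  "projm X = X - Qf X (Emat 4 5) *\<^sub>R Emat 4 5"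

text \<open>The modules m_1,...,m_6, each given by its Q-orthonormal basis, and
  Q_{m_i} = Q restricted to m_i, extended by zero.\<close>

definition m1 :: "(real^5^5) set" where "m1 = {Emat 2 3}"
definition m2 :: "(real^5^5) set" where "m2 = {Emat 3 4, Emat 3 5}"
definition m3 :: "(real^5^5) set" where "m3 = {Emat 2 4, Emat 2 5}"
definition m4 :: "(real^5^5) set" where "m4 = {Emat 1 4, Emat 1 5}"
definition m5 :: "(real^5^5) set" where "m5 = {Emat 1 3}"
definition m6 :: "(real^5^5) set" where "m6 = {Emat 1 2}"

definition Qsub :: "(real^5^5) set \<Rightarrow> real^5^5 \<Rightarrow> real^5^5 \<Rightarrow> real" where
  "Qsub B X Y = (\<Sum>b\<in>B. Qf b X * Qf b Y)"

text \<open>A fixed Q-orthonormal basis of m, indexed by the numeral type 9. Ad(H)-invariant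
  inner products on m are represented by their Gram matrices (real^9^9) in this basis;
  this gives the topology on the space of invariant metrics.\<close>

definition mb :: "9 \<Rightarrow> real^5^5" where
  "mb i = (if i = 0 then Emat 2 3 else if i = 1 then Emat 3 4 else if i = 2 then Emat 3 5
           else if i = 3 then Emat 2 4 else if i = 4 then Emat 2 5 else if i = 5 then Emat 1 4
           else if i = 6 then Emat 1 5 else if i = 7 then Emat 1 3 else Emat 1 2)"

definition gform :: "real^9^9 \<Rightarrow> real^5^5 \<Rightarrow> real^5^5 \<Rightarrow> real" where
  "gform P X Y = (\<Sum>i\<in>UNIV. \<Sum>j\<in>UNIV. Qf (mb i) X * P $ i $ j * Qf (mb j) Y)"

definition gram :: "(real^5^5 \<Rightarrow> real^5^5 \<Rightarrow> real) \<Rightarrow> real^9^9" where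
  "gram B = (\<chi> i j. B (mb i) (mb j))"

text \<open>SO(5)-invariant metrics on SO(5)/SO(2) = Ad(H)-invariant inner products on m.\<close>

definition InvMetrics :: "(real^9^9) set" where
  "InvMetrics = {P. transpose P = P \<and> (\<forall>v. v \<noteq> 0 \<longrightarrow> v \<bullet> (P *v v) > 0) \<and>
      (\<forall>h\<in>Hgrp. \<forall>X\<in>mspace. \<forall>Y\<in>mspace. gform P (Ad h X) (Ad h Y) = gform P X Y)}"

text \<open>Same volume as Q|_m: since mb is Q-orthonormal, the volume ratio is sqrt(det P).\<close>

definition M1 :: "(real^9^9) set" where
  "M1 = {P \<in> InvMetrics. det P = 1}"

text \<open>The tensor U (Besse, Einstein Manifolds, 7.27) and the curvature formula
  for reductive homogeneous spaces (Besse 7.30).\<close>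

definition Uop :: "real^9^9 \<Rightarrow> real^5^5 \<Rightarrow> real^5^5 \<Rightarrow> real^5^5" where
  "Uop P X Y = (THE u. u \<in> mspace \<and> (\<forall>Z\<in>mspace.
      2 * gform P u Z = gform P (projm (brk Z X)) Y + gform P X (projm (brk Z Y))))"

definition curvnum :: "real^9^9 \<Rightarrow> real^5^5 \<Rightarrow> real^5^5 \<Rightarrow> real" where
  "curvnum P X Y =
     - (3/4) * gform P (projm (brk X Y)) (projm (brk X Y))
     - (1/2) * gform P (projm (brk X (brk X Y))) Y
     - (1/2) * gform P (projm (brk Y (brk Y X))) X
     + gform P (Uop P X Y) (Uop P X Y) - gform P (Uop P X X) (Uop P Y Y)"

definition seccurv :: "real^9^9 \<Rightarrow> real^5^5 \<Rightarrow> real^5^5 \<Rightarrow> real" where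
  "seccurv P X Y = curvnum P X Y / (gform P X X * gform P Y Y - (gform P X Y)^2)"

definition is_onb :: "real^9^9 \<Rightarrow> (9 \<Rightarrow> real^5^5) \<Rightarrow> bool" where
  "is_onb P f \<longleftrightarrow> (\<forall>i. f i \<in> mspace) \<and> (\<forall>i j. gform P (f i) (f j) = (if i = j then 1 else 0))"

text \<open>Scalar curvature = sum of sectional curvatures over ordered pairs of distinct
  vectors of a g-orthonormal basis of m (independent of the basis chosen).\<close>

definition scal :: "real^9^9 \<Rightarrow> real" where
  "scal P = (let f = (SOME f. is_onb P f) in
      (\<Sum>i\<in>UNIV. \<Sum>j\<in>UNIV. if i \<noteq> j then seccurv P (f i) (f j) else 0))"

definition gseq :: "nat \<Rightarrow> real^9^9" where
  "gseq n = gram (\<lambda>X Y. 1 / (4 * real n ^ 4) * Qsub m1 X Y + Qsub m2 X Y + Qsub m3 X Y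
                        + real n * Qsub m4 X Y + 2 * real n * Qsub m5 X Y + 2 * real n * Qsub m6 X Y)"

end

theory Submission
  imports Defs "HOL-Real_Asymp.Real_Asymp"
begin

text \<open>Every metric g(n) is diagonal in the Q-orthonormal basis mb of m, with weights
  w = (1/(4t^4), 1, 1, 1, 1, t, t, 2t, 2t) for t = n. The product of the weights is 1, and the
  weight 2t on E_12 leaves every compact set. By Besse's formula the curvature numerator of
  vectors with coordinates x, y is a quadratic form with 42 terms c P_ab P_a'b' in the Pluecker
  coordinates P_ab = x_a y_b - x_b y_a, while by Lagrange's identity the Gram determinant is
  the sum of w_a w_b P_ab^2 over a < b. For t >= 1 every coefficient satisfies
  c^2 <= 36 w_a w_b w_a' w_b', so by AM-GM each term is at most 6 times the Gram determinant and
  the sectional curvature is at most 252 in absolute value. Summing the same quadratic form over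
  a g-orthonormal basis, whose coordinate vectors F_i satisfy sum_i F_ia F_ic = delta_ac / w_a,
  gives the scalar curvature.\<close>


lemma UNIV_5: "(UNIV :: 5 set) = {1, 2, 3, 4, 5}"
proof -
  have "x \<in> {1, 2, 3, 4, 5}" for x :: 5
  proof (induct x)
    case (of_int z)
    then have "z \<in> {0, 1, 2, 3, 4}" by fastforce
    then show ?case by auto
  qed
  then show ?thesis by blast
qed

lemma UNIV_9: "(UNIV :: 9 set) = {0, 1, 2, 3, 4, 5, 6, 7, 8}"
proof -
  have "x \<in> {0, 1, 2, 3, 4, 5, 6, 7, 8}" for x :: 9
  proof (induct x)
    case (of_int z)
    then have "z \<in> {0, 1, 2, 3, 4, 5, 6, 7, 8}" by fastforce
    then show ?case by auto
  qed
  then show ?thesis by blast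
qed

lemma sum_UNIV_5: "(\<Sum>k\<in>UNIV. f k) = f 1 + f 2 + f 3 + f 4 + f (5::5)"
  unfolding UNIV_5 by (simp add: ac_simps)

lemma sum_UNIV_9: "(\<Sum>k\<in>UNIV. f k) = f 0 + f 1 + f 2 + f 3 + f 4 + f 5 + f 6 + f 7 + f (8::9)"
  unfolding UNIV_9 by (simp add: ac_simps)

lemma prod_UNIV_9: "(\<Prod>k\<in>UNIV. f k) = f 0 * f 1 * f 2 * f 3 * f 4 * f 5 * f 6 * f 7 * f (8::9)"
  unfolding UNIV_9 by (simp add: ac_simps)

lemma all_5: "(\<forall>k::5. P k) \<longleftrightarrow> P 1 \<and> P 2 \<and> P 3 \<and> P 4 \<and> P 5"
  by (metis UNIV_5 UNIV_I empty_iff insert_iff)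

lemma cases_9:
  fixes k :: 9
  obtains "k = 0" | "k = 1" | "k = 2" | "k = 3" | "k = 4" | "k = 5" | "k = 6" | "k = 7" | "k = 8"
  using UNIV_9 by blast

definition vec9 :: "'a \<Rightarrow> 'a \<Rightarrow> 'a \<Rightarrow> 'a \<Rightarrow> 'a \<Rightarrow> 'a \<Rightarrow> 'a \<Rightarrow> 'a \<Rightarrow> 'a \<Rightarrow> 9 \<Rightarrow> 'a" where
  "vec9 a0 a1 a2 a3 a4 a5 a6 a7 a8 i =
     (if i = 0 then a0 else if i = 1 then a1 else if i = 2 then a2 else if i = 3 then a3
      else if i = 4 then a4 else if i = 5 then a5 else if i = 6 then a6 else if i = 7 then a7 else a8)"

lemma vec9_simps [simp]:
  "vec9 a0 a1 a2 a3 a4 a5 a6 a7 a8 0 = a0" "vec9 a0 a1 a2 a3 a4 a5 a6 a7 a8 1 = a1"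
  "vec9 a0 a1 a2 a3 a4 a5 a6 a7 a8 2 = a2" "vec9 a0 a1 a2 a3 a4 a5 a6 a7 a8 3 = a3"
  "vec9 a0 a1 a2 a3 a4 a5 a6 a7 a8 4 = a4" "vec9 a0 a1 a2 a3 a4 a5 a6 a7 a8 5 = a5"
  "vec9 a0 a1 a2 a3 a4 a5 a6 a7 a8 6 = a6" "vec9 a0 a1 a2 a3 a4 a5 a6 a7 a8 7 = a7"
  "vec9 a0 a1 a2 a3 a4 a5 a6 a7 a8 8 = a8"
  by (simp_all add: vec9_def)

lemma mult_if_zero:
  "(if P then a else 0) * (x :: real) = (if P then a * x else 0)"
  "x * (if P then a else 0) = (if P then x * a else 0)"
  by simp_all

lemma matrix_inv_eqI:
  fixes A B :: "'a::comm_ring_1^'n^'n"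
  assumes "A ** B = mat 1" and "B ** A = mat 1"
  shows "matrix_inv A = B"
  unfolding matrix_inv_def
proof (rule some_equality)
  fix A' assume A': "A ** A' = mat 1 \<and> A' ** A = mat 1"
  have "A' = A' ** (A ** B)" by (simp add: assms(1))
  also have "\<dots> = (A' ** A) ** B" by (rule matrix_mul_assoc)
  also have "\<dots> = B" using A' by simp
  finally show "A' = B" .
qed (use assms in simp)

lemma sum_sum_list_swap:
  "(\<Sum>i\<in>A. sum_list (map (g i) xs)) = sum_list (map (\<lambda>x. \<Sum>i\<in>A. g i x) xs)"
  by (induction xs) (simp_all add: sum.distrib)

lemma abs_mult_le_am_gm:
  fixes c A B K p q :: real
  assumes "c\<^sup>2 \<le> 4 * K\<^sup>2 * (A * B)" "0 \<le> A" "0 \<le> B" "0 \<le> K"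
  shows "\<bar>c * p * q\<bar> \<le> K * (A * p\<^sup>2 + B * q\<^sup>2)"
proof -
  define u where "u = K * A * p\<^sup>2"
  define v where "v = K * B * q\<^sup>2"
  have "0 \<le> u" "0 \<le> v"
    using assms(2-4) by (simp_all add: u_def v_def)
  have "\<bar>c * p * q\<bar>\<^sup>2 = c\<^sup>2 * (p\<^sup>2 * q\<^sup>2)"
    by (simp add: power_mult_distrib)
  also have "\<dots> \<le> 4 * K\<^sup>2 * (A * B) * (p\<^sup>2 * q\<^sup>2)"
    using assms(1) by (rule mult_right_mono) simp
  also have "\<dots> = 4 * u * v"
    unfolding u_def v_def by algebra
  also have "\<dots> \<le> (u + v)\<^sup>2"
  proof -
    have "(u + v)\<^sup>2 - 4 * u * v = (u - v)\<^sup>2" by algebra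
    then show ?thesis using zero_le_power2[of "u - v"] by linarith
  qed
  finally have "\<bar>c * p * q\<bar> \<le> u + v"
    using \<open>0 \<le> u\<close> \<open>0 \<le> v\<close> by (meson add_nonneg_nonneg power2_le_imp_le)
  then show ?thesis
    unfolding u_def v_def by (simp add: distrib_left mult.assoc)
qed


section \<open>Pluecker coordinates\<close>

definition plucker :: "('a \<Rightarrow> real) \<Rightarrow> ('a \<Rightarrow> real) \<Rightarrow> 'a \<Rightarrow> 'a \<Rightarrow> real" where
  "plucker x y a b = x a * y b - x b * y a"

definition plucker_norm :: "('a::finite \<Rightarrow> real) \<Rightarrow> ('a \<Rightarrow> real) \<Rightarrow> ('a \<Rightarrow> real) \<Rightarrow> real" where
  "plucker_norm d x y = (\<Sum>a\<in>UNIV. \<Sum>b\<in>UNIV. d a * d b * (plucker x y a b)\<^sup>2) / 2"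

lemma lagrange_identity:
  fixes d x y :: "'a::finite \<Rightarrow> real"
  shows "(\<Sum>i\<in>UNIV. d i * x i * x i) * (\<Sum>i\<in>UNIV. d i * y i * y i)
      - (\<Sum>i\<in>UNIV. d i * x i * y i)\<^sup>2 = plucker_norm d x y"
proof -
  have "d a * d b * (plucker x y a b)\<^sup>2
      = (d a * x a * x a) * (d b * y b * y b) + (d a * y a * y a) * (d b * x b * x b)
        - 2 * ((d a * x a * y a) * (d b * x b * y b))" for a b
    by (simp add: plucker_def power2_eq_square algebra_simps)
  then have "(\<Sum>a\<in>UNIV. \<Sum>b\<in>UNIV. d a * d b * (plucker x y a b)\<^sup>2)
      = (\<Sum>a\<in>UNIV. \<Sum>b\<in>UNIV. (d a * x a * x a) * (d b * y b * y b))
        + (\<Sum>a\<in>UNIV. \<Sum>b\<in>UNIV. (d a * y a * y a) * (d b * x b * x b))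
        - 2 * (\<Sum>a\<in>UNIV. \<Sum>b\<in>UNIV. (d a * x a * y a) * (d b * x b * y b))"
    by (simp add: sum.distrib sum_subtractf sum_distrib_left)
  then show ?thesis
    by (simp add: plucker_norm_def sum_product[symmetric] power2_eq_square)
qed

lemma plucker_term_le_norm:
  fixes d x y :: "'a::finite \<Rightarrow> real"
  assumes "\<And>i. 0 \<le> d i"
  shows "d a * d b * (plucker x y a b)\<^sup>2 \<le> plucker_norm d x y"
proof -
  define f where "f = (\<lambda>(a, b). d a * d b * (plucker x y a b)\<^sup>2)"
  have f_nonneg: "0 \<le> f p" for p
    using assms by (auto simp: f_def split: prod.split)
  have f_swap: "f (b, a) = f (a, b)"
    by (simp add: f_def plucker_def power2_commute algebra_simps)
  have "f (a, a) = 0"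
    by (simp add: f_def plucker_def)
  then have "f (a, b) + f (b, a) \<le> sum f {(a, b), (b, a)}"
    by (cases "a = b") simp_all
  also have "\<dots> \<le> sum f UNIV"
    using f_nonneg by (intro sum_mono2) auto
  also have "\<dots> = 2 * plucker_norm d x y"
    by (simp add: plucker_norm_def f_def sum.cartesian_product[symmetric] UNIV_Times_UNIV[symmetric]
        del: UNIV_Times_UNIV)
  finally have "f (a, b) \<le> plucker_norm d x y"
    using f_swap by linarith
  then show ?thesis by (simp add: f_def)
qed

lemma sum_plucker_products:
  fixes F :: "'i::finite \<Rightarrow> 'a \<Rightarrow> real"
  shows "(\<Sum>i\<in>UNIV. \<Sum>j\<in>UNIV. plucker (F i) (F j) a b * plucker (F i) (F j) a' b')
    = 2 * ((\<Sum>i\<in>UNIV. F i a * F i a') * (\<Sum>i\<in>UNIV. F i b * F i b')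
         - (\<Sum>i\<in>UNIV. F i a * F i b') * (\<Sum>i\<in>UNIV. F i b * F i a'))"
proof -
  have expand: "plucker (F i) (F j) a b * plucker (F i) (F j) a' b'
      = (F i a * F i a') * (F j b * F j b') - (F i a * F i b') * (F j b * F j a')
        - (F i b * F i a') * (F j a * F j b') + (F i b * F i b') * (F j a * F j a')" for i j
    by (simp add: plucker_def algebra_simps)
  have "(\<Sum>i\<in>UNIV. \<Sum>j\<in>UNIV. plucker (F i) (F j) a b * plucker (F i) (F j) a' b')
      = (\<Sum>i\<in>UNIV. \<Sum>j\<in>UNIV. (F i a * F i a') * (F j b * F j b'))
        - (\<Sum>i\<in>UNIV. \<Sum>j\<in>UNIV. (F i a * F i b') * (F j b * F j a'))
        - (\<Sum>i\<in>UNIV. \<Sum>j\<in>UNIV. (F i b * F i a') * (F j a * F j b'))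
        + (\<Sum>i\<in>UNIV. \<Sum>j\<in>UNIV. (F i b * F i b') * (F j a * F j a'))"
    by (simp only: expand sum.distrib sum_subtractf)
  also have "\<dots> = (\<Sum>i\<in>UNIV. F i a * F i a') * (\<Sum>j\<in>UNIV. F j b * F j b')
      - (\<Sum>i\<in>UNIV. F i a * F i b') * (\<Sum>j\<in>UNIV. F j b * F j a')
      - (\<Sum>i\<in>UNIV. F i b * F i a') * (\<Sum>j\<in>UNIV. F j a * F j b')
      + (\<Sum>i\<in>UNIV. F i b * F i b') * (\<Sum>j\<in>UNIV. F j a * F j a')"
    by (simp only: sum_product)
  finally show ?thesis
    by (simp add: algebra_simps)
qed

lemma sum_orthonormal_coords:
  fixes F :: "'n::finite \<Rightarrow> 'n \<Rightarrow> real"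
  assumes pos: "\<And>k. 0 < d k"
    and orth: "\<And>i j. (\<Sum>k\<in>UNIV. d k * F i k * F j k) = (if i = j then 1 else 0)"
  shows "(\<Sum>i\<in>UNIV. F i a * F i c) = (if a = c then 1 / d a else 0)"
proof -
  define G :: "real^'n^'n" where "G = (\<chi> i k. F i k * sqrt (d k))"
  have "(G ** transpose G) $ i $ j = mat 1 $ i $ j" for i j
  proof -
    have "(G ** transpose G) $ i $ j = (\<Sum>k\<in>UNIV. d k * F i k * F j k)"
      using pos by (simp add: G_def matrix_matrix_mult_def transpose_def algebra_simps
          real_sqrt_mult[symmetric] less_imp_le)
    then show ?thesis by (simp add: orth mat_def)
  qed
  then have "transpose G ** G = mat 1"
    using matrix_left_right_inverse by (metis vec_eq_iff)
  then have "sqrt (d a) * sqrt (d c) * (\<Sum>i\<in>UNIV. F i a * F i c) = (if a = c then 1 else 0)"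
    by (drule_tac arg_cong[where f = "\<lambda>M. M $ a $ c"])
      (simp add: G_def matrix_matrix_mult_def transpose_def mat_def sum_distrib_left algebra_simps)
  then show ?thesis
    using pos[of a] pos[of c] by (cases "a = c") (simp_all add: field_simps)
qed


section \<open>Coordinates on so(5)\<close>

definition skew :: "(9 \<Rightarrow> real) \<Rightarrow> real \<Rightarrow> real^5^5" where
  "skew c e = (\<Sum>i\<in>UNIV. c i *\<^sub>R mb i) + e *\<^sub>R Emat 4 5"

lemma skew_nth [simp]:
  "skew c e $ 1 $ 1 = 0"   "skew c e $ 1 $ 2 = c 8"   "skew c e $ 1 $ 3 = c 7"
  "skew c e $ 1 $ 4 = c 5" "skew c e $ 1 $ 5 = c 6"   "skew c e $ 2 $ 1 = - c 8"
  "skew c e $ 2 $ 2 = 0"   "skew c e $ 2 $ 3 = c 0"   "skew c e $ 2 $ 4 = c 3"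
  "skew c e $ 2 $ 5 = c 4" "skew c e $ 3 $ 1 = - c 7" "skew c e $ 3 $ 2 = - c 0"
  "skew c e $ 3 $ 3 = 0"   "skew c e $ 3 $ 4 = c 1"   "skew c e $ 3 $ 5 = c 2"
  "skew c e $ 4 $ 1 = - c 5" "skew c e $ 4 $ 2 = - c 3" "skew c e $ 4 $ 3 = - c 1"
  "skew c e $ 4 $ 4 = 0"   "skew c e $ 4 $ 5 = e"     "skew c e $ 5 $ 1 = - c 6"
  "skew c e $ 5 $ 2 = - c 4" "skew c e $ 5 $ 3 = - c 2" "skew c e $ 5 $ 4 = - e"
  "skew c e $ 5 $ 5 = 0"
  by (simp_all add: skew_def sum_UNIV_9 mb_def Emat_def)

lemma mb_eq_skew: "mb i = skew (\<lambda>k. if k = i then 1 else 0) 0"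
proof -
  have "(\<lambda>k. (if k = i then 1 else 0) *\<^sub>R mb k) = (\<lambda>k. if k = i then mb k else 0)"
    by auto
  then show ?thesis by (simp only: skew_def) simp
qed

lemma Emat45_eq_skew: "k *\<^sub>R Emat 4 5 = skew (\<lambda>_. 0) k"
  by (simp add: skew_def)

lemma Qf_skew: "Qf (skew c e) (skew c' e') = (\<Sum>i\<in>UNIV. c i * c' i) + e * e'"
  by (simp add: Qf_def trace_def matrix_matrix_mult_def sum_UNIV_5 sum_UNIV_9 algebra_simps)

lemma Qf_mb_skew: "Qf (mb k) (skew c e) = c k"
  by (simp add: mb_eq_skew Qf_skew mult_if_zero)

lemma Qf_mb_mb: "Qf (mb k) (mb i) = (if k = i then 1 else 0)"
  by (simp add: mb_eq_skew[of i] Qf_mb_skew)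

lemma projm_skew: "projm (skew c e) = skew c 0"
proof -
  have "Qf (skew c e) (Emat 4 5) = e"
    using Qf_skew[of c e "\<lambda>_. 0" 1] Emat45_eq_skew[of 1] by simp
  then show ?thesis
    by (simp add: projm_def skew_def)
qed

lemma skew_in_mspace: "skew c 0 \<in> mspace"
proof -
  have "skew c 0 \<in> so5"
    unfolding so5_def transpose_def vec_eq_iff all_5 by simp
  moreover have "Qf (skew c 0) Y = 0" if "Y \<in> hlie" for Y
  proof -
    obtain k where "Y = k *\<^sub>R Emat 4 5"
      using \<open>Y \<in> hlie\<close> unfolding hlie_def span_singleton by auto
    then show ?thesis by (simp add: Emat45_eq_skew Qf_skew)
  qed
  ultimately show ?thesis unfolding mspace_def by blast
qed

lemma so5_eq_skew:
  assumes "transpose X = - X"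
  shows "X = skew (vec9 (X$2$3) (X$3$4) (X$3$5) (X$2$4) (X$2$5) (X$1$4) (X$1$5) (X$1$3) (X$1$2)) (X$4$5)"
proof -
  have anti: "X $ j $ i = - X $ i $ j" for i j
    using arg_cong[OF assms, of "\<lambda>A. A $ i $ j"] by (simp add: transpose_def)
  have "X $ i $ i = 0" for i
    using anti[of i i] by simp
  then show ?thesis
    unfolding vec_eq_iff all_5
    by (simp add: anti[of 1 2] anti[of 1 3] anti[of 1 4] anti[of 1 5] anti[of 2 3]
        anti[of 2 4] anti[of 2 5] anti[of 3 4] anti[of 3 5] anti[of 4 5])
qed

lemma mspace_iff: "X \<in> mspace \<longleftrightarrow> (\<exists>c. X = skew c 0)"
proof
  assume X: "X \<in> mspace"
  then obtain c e where c: "X = skew c e"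
    using so5_eq_skew unfolding mspace_def so5_def by blast
  have "Qf X (Emat 4 5) = 0"
    using X unfolding mspace_def hlie_def by (auto intro: span_base)
  then have "e = 0"
    using Qf_skew[of c e "\<lambda>_. 0" 1] Emat45_eq_skew[of 1] by (simp add: c)
  then show "\<exists>c. X = skew c 0" using c by blast
qed (use skew_in_mspace in blast)

lemma brk_skew:
  "brk (skew c e) (skew c' e') = skew
     (vec9
       (c 1 * c' 3 + c 2 * c' 4 - c 3 * c' 1 - c 4 * c' 2 + c 7 * c' 8 - c 8 * c' 7)
       (- c 0 * c' 3 - c 2 * e' + c 3 * c' 0 + c 5 * c' 7 - c 7 * c' 5 + c' 2 * e)
       (- c 0 * c' 4 + c 1 * e' + c 4 * c' 0 + c 6 * c' 7 - c 7 * c' 6 - c' 1 * e)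
       (c 0 * c' 1 - c 1 * c' 0 - c 4 * e' + c 5 * c' 8 - c 8 * c' 5 + c' 4 * e)
       (c 0 * c' 2 - c 2 * c' 0 + c 3 * e' + c 6 * c' 8 - c 8 * c' 6 - c' 3 * e)
       (- c 1 * c' 7 - c 3 * c' 8 - c 6 * e' + c 7 * c' 1 + c 8 * c' 3 + c' 6 * e)
       (- c 2 * c' 7 - c 4 * c' 8 + c 5 * e' + c 7 * c' 2 + c 8 * c' 4 - c' 5 * e)
       (- c 0 * c' 8 + c 1 * c' 5 + c 2 * c' 6 - c 5 * c' 1 - c 6 * c' 2 + c 8 * c' 0)
       (c 0 * c' 7 + c 3 * c' 5 + c 4 * c' 6 - c 5 * c' 3 - c 6 * c' 4 - c 7 * c' 0))
     (- c 1 * c' 2 + c 2 * c' 1 - c 3 * c' 4 + c 4 * c' 3 - c 5 * c' 6 + c 6 * c' 5)"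
  unfolding vec_eq_iff all_5
  by (simp add: brk_def matrix_matrix_mult_def sum_UNIV_5 algebra_simps)


section \<open>Metrics that are diagonal in the basis mb\<close>

definition diagm :: "(9 \<Rightarrow> real) \<Rightarrow> real^9^9" where
  "diagm d = (\<chi> i j. if i = j then d i else 0)"

lemma gform_diagm: "gform (diagm d) X Y = (\<Sum>i\<in>UNIV. d i * Qf (mb i) X * Qf (mb i) Y)"
proof -
  have "gform (diagm d) X Y
      = (\<Sum>i\<in>UNIV. \<Sum>j\<in>UNIV. if j = i then Qf (mb i) X * d i * Qf (mb j) Y else 0)"
    unfolding gform_def diagm_def by (intro sum.cong refl) auto
  then show ?thesis by (simp add: algebra_simps)
qed

lemma gform_diagm_skew: "gform (diagm d) (skew x e) (skew y e') = (\<Sum>i\<in>UNIV. d i * x i * y i)"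
  by (simp add: gform_diagm Qf_mb_skew)

lemma gform_diagm_mb: "gform (diagm d) (skew x e) (mb k) = d k * x k"
  by (simp add: mb_eq_skew gform_diagm_skew mult_if_zero)

lemma Hrot_orthogonal:
  "Hrot s ** transpose (Hrot s) = mat 1" "transpose (Hrot s) ** Hrot s = mat 1"
  unfolding vec_eq_iff all_5 matrix_matrix_mult_def sum_UNIV_5 transpose_def
  by (simp_all add: Hrot_def mat_def algebra_simps)

lemma Ad_Hrot_skew:
  "Ad (Hrot s) (skew x 0) = skew
     (vec9 (x 0)
       (cos s * x 1 + sin s * x 2) (- sin s * x 1 + cos s * x 2)
       (cos s * x 3 + sin s * x 4) (- sin s * x 3 + cos s * x 4)
       (cos s * x 5 + sin s * x 6) (- sin s * x 5 + cos s * x 6)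
       (x 7) (x 8)) 0"
  unfolding Ad_def matrix_inv_eqI[OF Hrot_orthogonal] vec_eq_iff all_5 matrix_matrix_mult_def
    sum_UNIV_5 transpose_def
  by (simp add: Hrot_def algebra_simps)

lemma gform_diagm_Ad:
  assumes "d 1 = d 2" "d 3 = d 4" "d 5 = d 6"
    and "h \<in> Hgrp" "X \<in> mspace" "Y \<in> mspace"
  shows "gform (diagm d) (Ad h X) (Ad h Y) = gform (diagm d) X Y"
proof -
  obtain s where h: "h = Hrot s" using assms(4) unfolding Hgrp_def by auto
  obtain x where X: "X = skew x 0" using assms(5) mspace_iff by blast
  obtain y where Y: "Y = skew y 0" using assms(6) mspace_iff by blast
  have "sin s ^ 2 + cos s ^ 2 = 1" by simp
  then show ?thesis
    unfolding h X Y Ad_Hrot_skew gform_diagm_skew sum_UNIV_9 vec9_simps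
    using assms(1-3) by algebra
qed

lemma diagm_in_M1:
  assumes pos: "\<And>i. 0 < d i"
    and "d 1 = d 2" "d 3 = d 4" "d 5 = d 6"
    and "(\<Prod>i\<in>UNIV. d i) = 1"
  shows "diagm d \<in> M1"
proof -
  have "transpose (diagm d) = diagm d"
    by (simp add: vec_eq_iff transpose_def diagm_def)
  moreover have "v \<bullet> (diagm d *v v) > 0" if "v \<noteq> 0" for v
  proof -
    obtain i where "v $ i \<noteq> 0" using \<open>v \<noteq> 0\<close> by (auto simp: vec_eq_iff)
    have "v \<bullet> (diagm d *v v) = (\<Sum>k\<in>UNIV. d k * (v $ k)\<^sup>2)"
      by (simp add: inner_vec_def matrix_vector_mult_def diagm_def mult_if_zero power2_eq_square
          mult_ac)
    also have "\<dots> > 0"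
      using pos \<open>v $ i \<noteq> 0\<close> by (intro sum_pos2[where i = i]) (simp_all add: less_imp_le)
    finally show ?thesis .
  qed
  moreover have "det (diagm d) = 1"
    using assms(5) by (subst det_diagonal) (simp_all add: diagm_def)
  ultimately show ?thesis
    unfolding M1_def InvMetrics_def using gform_diagm_Ad assms(2-4) by auto
qed

lemma Uop_diagm_eqI:
  assumes pos: "\<And>i. 0 < d i"
    and U: "\<And>z. 2 * gform (diagm d) (skew u 0) (skew z 0)
      = gform (diagm d) (projm (brk (skew z 0) X)) Y + gform (diagm d) X (projm (brk (skew z 0) Y))"
  shows "Uop (diagm d) X Y = skew u 0"
  unfolding Uop_def
proof (rule the_equality)
  show "skew u 0 \<in> mspace \<and> (\<forall>Z\<in>mspace. 2 * gform (diagm d) (skew u 0) Z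
      = gform (diagm d) (projm (brk Z X)) Y + gform (diagm d) X (projm (brk Z Y)))"
    using U skew_in_mspace mspace_iff by auto
next
  fix V assume V: "V \<in> mspace \<and> (\<forall>Z\<in>mspace. 2 * gform (diagm d) V Z
      = gform (diagm d) (projm (brk Z X)) Y + gform (diagm d) X (projm (brk Z Y)))"
  then obtain v where v: "V = skew v 0" using mspace_iff by blast
  have "2 * gform (diagm d) V (mb k) = 2 * gform (diagm d) (skew u 0) (mb k)" for k
    using V U[of "\<lambda>i. if i = k then 1 else 0"] skew_in_mspace[of "\<lambda>i. if i = k then 1 else 0"]
    by (simp flip: mb_eq_skew)
  then have "d k * v k = d k * u k" for k
    by (simp add: v gform_diagm_mb)
  then have "v = u" using pos by (metis less_irrefl mult_cancel_left ext)
  then show "V = skew u 0" using v by simp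
qed

lemma diagm_orthonormal_basis:
  assumes "\<And>i. 0 < d i"
  shows "is_onb (diagm d) (\<lambda>i. skew (\<lambda>k. if k = i then 1 / sqrt (d i) else 0) 0)"
  unfolding is_onb_def
proof (intro conjI allI)
  fix i j
  have "(\<Sum>k\<in>UNIV. d k * (if k = i then 1 / sqrt (d i) else 0) * (if k = j then 1 / sqrt (d j) else 0))
      = (if i = j then d i / (sqrt (d i))\<^sup>2 else 0)"
    by (simp add: mult_if_zero power2_eq_square)
  also have "\<dots> = (if i = j then 1 else 0)"
    using assms[of j] by auto
  finally show "gform (diagm d) (skew (\<lambda>k. if k = i then 1 / sqrt (d i) else 0) 0)
      (skew (\<lambda>k. if k = j then 1 / sqrt (d j) else 0) 0) = (if i = j then 1 else 0)"
    by (simp only: gform_diagm_skew)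
qed (rule skew_in_mspace)


section \<open>The sequence g(n)\<close>

lemma modules_eq_mb:
  "m1 = {mb 0}" "m2 = {mb 1, mb 2}" "m3 = {mb 3, mb 4}"
  "m4 = {mb 5, mb 6}" "m5 = {mb 7}" "m6 = {mb 8}"
  by (simp_all add: m1_def m2_def m3_def m4_def m5_def m6_def mb_def)

lemma inj_mb: "inj mb"
  by (rule injI) (metis Qf_mb_mb zero_neq_one)

lemma Qsub_modules:
  "Qsub m1 X Y = Qf (mb 0) X * Qf (mb 0) Y"
  "Qsub m2 X Y = Qf (mb 1) X * Qf (mb 1) Y + Qf (mb 2) X * Qf (mb 2) Y"
  "Qsub m3 X Y = Qf (mb 3) X * Qf (mb 3) Y + Qf (mb 4) X * Qf (mb 4) Y"
  "Qsub m4 X Y = Qf (mb 5) X * Qf (mb 5) Y + Qf (mb 6) X * Qf (mb 6) Y"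
  "Qsub m5 X Y = Qf (mb 7) X * Qf (mb 7) Y"
  "Qsub m6 X Y = Qf (mb 8) X * Qf (mb 8) Y"
  by (simp_all add: Qsub_def modules_eq_mb inj_eq[OF inj_mb])

definition gweight :: "real \<Rightarrow> 9 \<Rightarrow> real" where
  "gweight t = vec9 (1 / (4 * t ^ 4)) 1 1 1 1 t t (2 * t) (2 * t)"

lemma gweight_pos: "0 < t \<Longrightarrow> 0 < gweight t i"
  by (cases i rule: cases_9) (simp_all add: gweight_def)

lemma gseq_eq_diagm: "gseq n = diagm (gweight (real n))"
proof -
  have "gseq n $ i $ j = diagm (gweight (real n)) $ i $ j" for i j
    by (cases i rule: cases_9)
      (auto simp: gseq_def gram_def Qsub_modules Qf_mb_mb diagm_def gweight_def)
  then show ?thesis by (simp add: vec_eq_iff)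
qed

lemma gseq_in_M1:
  assumes "n \<ge> 1"
  shows "gseq n \<in> M1"
  unfolding gseq_eq_diagm
proof (rule diagm_in_M1)
  show "0 < gweight (real n) i" for i
    using assms by (simp add: gweight_pos)
  show "(\<Prod>i\<in>UNIV. gweight (real n) i) = 1"
    using assms by (simp add: prod_UNIV_9 gweight_def field_simps eval_nat_numeral)
qed (simp_all add: gweight_def)

lemma gseq_diverges: "\<not> (\<exists>K. compact K \<and> K \<subseteq> M1 \<and> (\<forall>n\<ge>1. gseq n \<in> K))"
proof
  assume "\<exists>K. compact K \<and> K \<subseteq> M1 \<and> (\<forall>n\<ge>1. gseq n \<in> K)"
  then obtain K where "bounded K" and K: "\<forall>n\<ge>1. gseq n \<in> K"
    using compact_imp_bounded by blast
  then obtain a where a: "\<forall>x\<in>K. norm x \<le> a"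
    unfolding bounded_iff by blast
  define n where "n = nat \<lceil>a\<rceil> + 1"
  have "2 * real n = \<bar>gseq n $ 8 $ 8\<bar>"
    by (simp add: gseq_eq_diagm diagm_def gweight_def)
  also have "\<dots> \<le> norm (gseq n)"
    by (rule order_trans[OF component_le_norm_cart Finite_Cartesian_Product.norm_nth_le])
  also have "\<dots> \<le> a"
    using a K by (simp add: n_def)
  finally show False
    using real_nat_ceiling_ge[of a] unfolding n_def by simp
qed


section \<open>Curvature\<close>

definition Ucoord :: "real \<Rightarrow> (9 \<Rightarrow> real) \<Rightarrow> (9 \<Rightarrow> real) \<Rightarrow> 9 \<Rightarrow> real" where
  "Ucoord t x y = (let m = 1 / t in vec9
     0
     ((1/2) * t * (x 7 * y 5 + x 5 * y 7) + ((1/8) * m ^ 4 - 1/2) * (x 3 * y 0 + x 0 * y 3))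
     ((1/2) * t * (x 7 * y 6 + x 6 * y 7) + ((1/8) * m ^ 4 - 1/2) * (x 4 * y 0 + x 0 * y 4))
     ((1/2) * t * (x 8 * y 5 + x 5 * y 8) + (1/2 - (1/8) * m ^ 4) * (x 1 * y 0 + x 0 * y 1))
     ((1/2) * t * (x 8 * y 6 + x 6 * y 8) + (1/2 - (1/8) * m ^ 4) * (x 2 * y 0 + x 0 * y 2))
     (((1/2) * m - 1) * (x 8 * y 3 + x 3 * y 8 + x 7 * y 1 + x 1 * y 7))
     (((1/2) * m - 1) * (x 8 * y 4 + x 4 * y 8 + x 7 * y 2 + x 2 * y 7))
     (((1/16) * m ^ 5 - 1/2) * (x 8 * y 0 + x 0 * y 8)
        + (1/4 - (1/4) * m) * (x 6 * y 2 + x 2 * y 6 + x 5 * y 1 + x 1 * y 5))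
     ((1/2 - (1/16) * m ^ 5) * (x 7 * y 0 + x 0 * y 7)
        + (1/4 - (1/4) * m) * (x 6 * y 4 + x 4 * y 6 + x 5 * y 3 + x 3 * y 5)))"

lemma Uop_gweight:
  assumes "0 < t"
  shows "Uop (diagm (gweight t)) (skew x 0) (skew y 0) = skew (Ucoord t x y) 0"
proof (rule Uop_diagm_eqI)
  show "0 < gweight t i" for i
    using assms by (rule gweight_pos)
  define m where "m = 1 / t"
  have tm: "t * m = 1" and w0: "1 / (4 * t ^ 4) = m ^ 4 / 4"
    using assms by (simp_all add: m_def power_one_over)
  fix z
  show "2 * gform (diagm (gweight t)) (skew (Ucoord t x y) 0) (skew z 0)
      = gform (diagm (gweight t)) (projm (brk (skew z 0) (skew x 0))) (skew y 0)
        + gform (diagm (gweight t)) (skew x 0) (projm (brk (skew z 0) (skew y 0)))"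
    unfolding Ucoord_def Let_def m_def[symmetric] brk_skew projm_skew gform_diagm_skew
      sum_UNIV_9 gweight_def vec9_simps w0
    using tm by algebra
qed

definition curv_terms :: "real \<Rightarrow> (real \<times> 9 \<times> 9 \<times> 9 \<times> 9) list" where
  "curv_terms t = (let m = 1 / t in [
      ((1/64)*m^8, 0, 1, 0, 1),
      (- (1/8)*m^3 + (5/16)*m^4 - (1/16)*m^5, 0, 1, 5, 8),
      ((1/64)*m^8, 0, 2, 0, 2),
      (- (1/8)*m^3 + (5/16)*m^4 - (1/16)*m^5, 0, 2, 6, 8),
      ((1/64)*m^8, 0, 3, 0, 3),
      ((1/8)*m^3 - (5/16)*m^4 + (1/16)*m^5, 0, 3, 5, 7),
      ((1/64)*m^8, 0, 4, 0, 4),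
      ((1/8)*m^3 - (5/16)*m^4 + (1/16)*m^5, 0, 4, 6, 7),
      ((1/4)*m^3 - (1/16)*m^4 - (1/16)*m^5, 0, 5, 1, 8),
      (- (1/4)*m^3 + (1/16)*m^4 + (1/16)*m^5, 0, 5, 3, 7),
      ((1/4)*m^3 - (1/16)*m^4 - (1/16)*m^5, 0, 6, 2, 8),
      (- (1/4)*m^3 + (1/16)*m^4 + (1/16)*m^5, 0, 6, 4, 7),
      ((1/128)*m^9, 0, 7, 0, 7),
      ((1/128)*m^9, 0, 8, 0, 8),
      (1, 1, 2, 1, 2),
      (2, 1, 2, 3, 4),
      ((1/2)*t + 2 - (1/2)*m, 1, 2, 5, 6),
      (1 - (3/16)*m^4, 1, 3, 1, 3),
      (2 - (3/8)*m^4, 1, 3, 2, 4),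
      (- 2*t + 5 - m - (3/8)*m^4, 1, 3, 7, 8),
      (- (7/8)*t + (1/4) + (1/8)*m, 1, 5, 1, 5),
      (- (7/4)*t + (1/2) + (1/4)*m, 1, 5, 2, 6),
      ((5/4)*t - (1/2) + (1/4)*m, 1, 7, 1, 7),
      ((5/2)*t - 1 + (1/2)*m, 1, 7, 3, 8),
      (1 - (3/16)*m^4, 2, 4, 2, 4),
      (- 2*t + 5 - m - (3/8)*m^4, 2, 4, 7, 8),
      (- (7/8)*t + (1/4) + (1/8)*m, 2, 6, 2, 6),
      ((5/4)*t - (1/2) + (1/4)*m, 2, 7, 2, 7),
      ((5/2)*t - 1 + (1/2)*m, 2, 7, 4, 8),
      (1, 3, 4, 3, 4),
      ((1/2)*t + 2 - (1/2)*m, 3, 4, 5, 6),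
      (- (7/8)*t + (1/4) + (1/8)*m, 3, 5, 3, 5),
      (- (7/4)*t + (1/2) + (1/4)*m, 3, 5, 4, 6),
      ((5/4)*t - (1/2) + (1/4)*m, 3, 8, 3, 8),
      (- (7/8)*t + (1/4) + (1/8)*m, 4, 6, 4, 6),
      ((5/4)*t - (1/2) + (1/4)*m, 4, 8, 4, 8),
      (t, 5, 6, 5, 6),
      ((1/4)*t^2 + (3/2)*t - (3/4), 5, 7, 5, 7),
      ((1/4)*t^2 + (3/2)*t - (3/4), 5, 8, 5, 8),
      ((1/4)*t^2 + (3/2)*t - (3/4), 6, 7, 6, 7),
      ((1/4)*t^2 + (3/2)*t - (3/4), 6, 8, 6, 8),
      (2*t - (3/16)*m^4, 7, 8, 7, 8)])"

definition curv_form :: "real \<Rightarrow> (9 \<Rightarrow> real) \<Rightarrow> (9 \<Rightarrow> real) \<Rightarrow> real" where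
  "curv_form t x y
     = sum_list (map (\<lambda>(c, a, b, a', b'). c * plucker x y a b * plucker x y a' b') (curv_terms t))"

lemma curvnum_gweight:
  assumes "0 < t"
  shows "curvnum (diagm (gweight t)) (skew x 0) (skew y 0) = curv_form t x y"
proof -
  define m where "m = 1 / t"
  have tm: "t * m = 1" and w0: "1 / (4 * t ^ 4) = m ^ 4 / 4"
    using assms by (simp_all add: m_def power_one_over)
  show ?thesis
    unfolding curvnum_def Uop_gweight[OF assms]
    unfolding Ucoord_def curv_form_def curv_terms_def Let_def
      m_def[symmetric] brk_skew projm_skew gform_diagm_skew sum_UNIV_9 gweight_def vec9_simps w0
      plucker_def list.map prod.case sum_list_simps
    using tm by algebra
qed

lemma curv_form_self: "curv_form t x x = 0"
proof -
  have "plucker x x a b = 0" for a b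
    by (simp add: plucker_def mult.commute)
  then show ?thesis
    by (simp add: curv_form_def split_def)
qed

text \<open>Clearing denominators turns each of these inequalities into one between polynomials
  in \<open>t\<close> whose right-hand side carries the highest power of \<open>t\<close>; the chain
  \<open>1 \<le> t \<le> t\<^sup>2 \<le> \<dots>\<close> then reduces it to linear arithmetic.\<close>

lemma curv_terms_coeff_bound:
  assumes "1 \<le> t"
  shows "\<forall>(c, a, b, a', b') \<in> set (curv_terms t).
    c\<^sup>2 \<le> 36 * (gweight t a * gweight t b * gweight t a' * gweight t b')"
proof -
  have mono: "t ^ i \<le> t ^ j" if "i \<le> j" for i j
    using power_increasing[OF that assms] .
  note chain =
    mono[of 0 1, simplified] mono[of 1 2, simplified] mono[of 2 3, simplified]
    mono[of 3 4, simplified] mono[of 4 5, simplified] mono[of 5 6, simplified]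
    mono[of 6 7, simplified] mono[of 7 8, simplified] mono[of 8 9, simplified]
    mono[of 9 10, simplified] mono[of 10 11, simplified] mono[of 11 12, simplified]
    mono[of 12 13, simplified] mono[of 13 14, simplified] mono[of 14 15, simplified]
    mono[of 15 16, simplified] mono[of 16 17, simplified] mono[of 17 18, simplified]
    mono[of 18 19, simplified] mono[of 19 20, simplified] mono[of 20 21, simplified]
    mono[of 21 22, simplified] mono[of 22 23, simplified] mono[of 23 24, simplified]
    mono[of 24 25, simplified] mono[of 25 26, simplified]
  show ?thesis
    unfolding curv_terms_def Let_def
    apply (simp add: gweight_def)
    using assms apply (simp add: field_simps power2_eq_square)
    apply (simp only: mult.assoc[symmetric] power_Suc[symmetric] power_Suc2[symmetric]
        power_add[symmetric] power2_eq_square[symmetric])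
    apply simp
    using chain by (intro conjI; argo)
qed

lemma curv_form_bound:
  assumes "1 \<le> t"
  shows "\<bar>curv_form t x y\<bar> \<le> 252 * plucker_norm (gweight t) x y"
proof -
  have w: "0 \<le> gweight t i" for i
    using assms gweight_pos[of t i] by simp
  have term_bound: "\<bar>c * plucker x y a b * plucker x y a' b'\<bar> \<le> 6 * plucker_norm (gweight t) x y"
    if "(c, a, b, a', b') \<in> set (curv_terms t)" for c a b a' b'
  proof -
    have "\<bar>c * plucker x y a b * plucker x y a' b'\<bar>
        \<le> 3 * (gweight t a * gweight t b * (plucker x y a b)\<^sup>2
               + gweight t a' * gweight t b' * (plucker x y a' b')\<^sup>2)"
      using curv_terms_coeff_bound[OF assms] that w
      by (intro abs_mult_le_am_gm) (auto simp: mult.assoc)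
    also have "\<dots> \<le> 6 * plucker_norm (gweight t) x y"
      using plucker_term_le_norm[where d = "gweight t" and a = a and b = b and x = x and y = y, OF w]
        plucker_term_le_norm[where d = "gweight t" and a = a' and b = b' and x = x and y = y, OF w]
      by simp
    finally show ?thesis .
  qed
  have "\<bar>curv_form t x y\<bar>
      \<le> (\<Sum>z\<leftarrow>curv_terms t. \<bar>(\<lambda>(c, a, b, a', b'). c * plucker x y a b * plucker x y a' b') z\<bar>)"
    unfolding curv_form_def by (rule order_trans[OF sum_list_abs]) (simp add: comp_def)
  also have "\<dots> \<le> (\<Sum>_\<leftarrow>curv_terms t. 6 * plucker_norm (gweight t) x y)"
    by (rule sum_list_mono) (auto intro: term_bound)
  also have "\<dots> = 252 * plucker_norm (gweight t) x y"
    by (simp add: sum_list_triv curv_terms_def Let_def)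
  finally show ?thesis .
qed

lemma gseq_curvature_bounded:
  assumes "n \<ge> 1" "X \<in> mspace" "Y \<in> mspace"
    and nondeg: "gform (gseq n) X X * gform (gseq n) Y Y - (gform (gseq n) X Y)\<^sup>2 \<noteq> 0"
  shows "\<bar>seccurv (gseq n) X Y\<bar> \<le> 252"
proof -
  obtain x y where X: "X = skew x 0" and Y: "Y = skew y 0"
    using assms(2,3) mspace_iff by blast
  let ?N = "plucker_norm (gweight (real n)) x y"
  have t: "1 \<le> real n" "0 < real n"
    using assms(1) by simp_all
  have den: "gform (gseq n) X X * gform (gseq n) Y Y - (gform (gseq n) X Y)\<^sup>2 = ?N"
    unfolding X Y gseq_eq_diagm gform_diagm_skew by (rule lagrange_identity)
  have "0 \<le> ?N"
    using plucker_term_le_norm[where d = "gweight (real n)" and a = 0 and b = 0 and x = x and y = y]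
      gweight_pos[OF t(2)] by (simp add: less_imp_le plucker_def)
  then have "0 < ?N"
    using nondeg den by simp
  have "seccurv (gseq n) X Y = curv_form (real n) x y / ?N"
    unfolding seccurv_def den unfolding X Y gseq_eq_diagm curvnum_gweight[OF t(2)] ..
  then show ?thesis
    using curv_form_bound[OF t(1), of x y] \<open>0 < ?N\<close> by (simp add: divide_le_eq)
qed

lemma scal_gweight:
  assumes "0 < t"
  shows "scal (diagm (gweight t))
    = (224 * t ^ 6 + 288 * t ^ 5 - 32 * t ^ 4 - 8 * t ^ 2 - 1) / (32 * t ^ 6)"
proof -
  define f where "f = (SOME f. is_onb (diagm (gweight t)) f)"
  have onb: "is_onb (diagm (gweight t)) f"
    unfolding f_def using diagm_orthonormal_basis[where d = "gweight t", OF gweight_pos[OF assms]]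
    by (rule someI[where P = "is_onb (diagm (gweight t))"])
  define F where "F i k = Qf (mb k) (f i)" for i k
  have f_eq: "f i = skew (F i) 0" for i
  proof -
    obtain c where c: "f i = skew c 0"
      using onb mspace_iff unfolding is_onb_def by blast
    then have "F i = c"
      by (simp add: F_def Qf_mb_skew fun_eq_iff)
    then show ?thesis using c by simp
  qed
  have gform_f: "gform (diagm (gweight t)) (f i) (f j) = (if i = j then 1 else 0)" for i j
    using onb unfolding is_onb_def by blast
  have coords: "(\<Sum>i\<in>UNIV. F i a * F i c) = (if a = c then 1 / gweight t a else 0)" for a c
    using gweight_pos[OF assms] gform_f
    by (intro sum_orthonormal_coords) (simp_all add: f_eq gform_diagm_skew)
  have sec: "seccurv (diagm (gweight t)) (f i) (f j) = curv_form t (F i) (F j)" if "i \<noteq> j" for i j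
    using gform_f[of i i] gform_f[of j j] gform_f[of i j] that
    by (simp add: seccurv_def f_eq curvnum_gweight[OF assms])
  have "scal (diagm (gweight t)) = (\<Sum>i\<in>UNIV. \<Sum>j\<in>UNIV. curv_form t (F i) (F j))"
    unfolding scal_def Let_def f_def[symmetric]
    by (intro sum.cong refl) (auto simp: sec curv_form_self)
  also have "\<dots> = (\<Sum>(c, a, b, a', b')\<leftarrow>curv_terms t. c * (\<Sum>i\<in>UNIV. \<Sum>j\<in>UNIV.
      plucker (F i) (F j) a b * plucker (F i) (F j) a' b'))"
    unfolding curv_form_def sum_sum_list_swap
    by (simp add: split_def sum_distrib_left mult.assoc)
  also have "\<dots> = (224 * t ^ 6 + 288 * t ^ 5 - 32 * t ^ 4 - 8 * t ^ 2 - 1) / (32 * t ^ 6)"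
    unfolding sum_plucker_products coords curv_terms_def Let_def
    using assms by (simp add: gweight_def field_simps eval_nat_numeral)
  finally show ?thesis .
qed

lemma scal_gseq:
  assumes "n \<ge> 1"
  shows "scal (gseq n)
    = (224 * real n ^ 6 + 288 * real n ^ 5 - 32 * real n ^ 4 - 8 * real n ^ 2 - 1) / (32 * real n ^ 6)"
  using assms by (simp add: gseq_eq_diagm scal_gweight)

lemma scal_gseq_tendsto: "(\<lambda>n. scal (gseq n)) \<longlonglongrightarrow> 7"
proof (rule Lim_transform_eventually)
  show "(\<lambda>n. (224 * real n ^ 6 + 288 * real n ^ 5 - 32 * real n ^ 4 - 8 * real n ^ 2 - 1)
      / (32 * real n ^ 6)) \<longlonglongrightarrow> 7"
    by real_asymp
  show "\<forall>\<^sub>F n in sequentially. (224 * real n ^ 6 + 288 * real n ^ 5 - 32 * real n ^ 4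
      - 8 * real n ^ 2 - 1) / (32 * real n ^ 6) = scal (gseq n)"
    using eventually_ge_at_top[of 1] by eventually_elim (simp add: scal_gseq)
qed

theorem mainTheorem16:
  shows "(\<forall>n\<ge>1. gseq n \<in> M1)
    \<and> \<not> (\<exists>K. compact K \<and> K \<subseteq> M1 \<and> (\<forall>n\<ge>1. gseq n \<in> K))
    \<and> (\<exists>C. \<forall>n\<ge>1. \<forall>X\<in>mspace. \<forall>Y\<in>mspace.
          gform (gseq n) X X * gform (gseq n) Y Y - (gform (gseq n) X Y)^2 \<noteq> 0
          \<longrightarrow> \<bar>seccurv (gseq n) X Y\<bar> \<le> C)
    \<and> (\<forall>n\<ge>1. scal (gseq n) =
          (224 * real n ^ 6 + 288 * real n ^ 5 - 32 * real n ^ 4 - 8 * real n ^ 2 - 1) / (32 * real n ^ 6))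
    \<and> (\<lambda>n. scal (gseq n)) \<longlonglongrightarrow> 7"
  using gseq_in_M1 gseq_diverges gseq_curvature_bounded scal_gseq scal_gseq_tendsto
  by blast

end
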